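(* Let $S$ be a finite virtual flat biquandle, $A$ an abelian group without 2-torsion, $\phi:S\times S\to A$ a 2-cocycle of both $\mathrm{Hom}(C^{VF}_\ast(S),A)$ and $\mathrm{Hom}(C^{SF}_\ast(S),A)$, and $\phi'$ a 2-coboundary of $\mathrm{Hom}(C^{VF}_\ast(S),A)$, i.e. $\phi'(a,b)=\eta(\partial_2(a,b))=-\eta(b)+\eta(b\circ a)+\eta(a\ast b)-\eta(a)$ for some map $\eta:S\to A$. Then $\phi+\phi'$ is a 2-cocycle of $\mathrm{Hom}(C^{SF}_\ast(S),A)$, and $\Phi_\phi(L)=\Phi_{\phi+\phi'}(L)$ for every oriented flat virtual link diagram $L$.
   Context: A virtual flat biquandle is a set $S$ with two binary operations $a\ast b$, $a\circ b$; writing $S_b(a)=a\ast b$, $T_b(a)=a\circ b$, for all $a,b$: $S_aS_b=S_bS_a$, $T_aT_b=T_bT_a$, $S_aT_b=T_bS_a$; $S_a=S_{T_b(a)}=S_{S_b(a)}$, $T_a=T_{S_b(a)}=T_{T_b(a)}$; $T_aS_a=S_aT_a=\mathrm{id}$. Complexes: $C_n(S)$ is free abelian on $n$-tuples of elements of $S$. $C^{VF}_\ast(S)=C_\ast(S)/C'_\ast(S)$ with boundary $\partial_n(a_1,\dots,a_n)=\sum_{i=1}^n(-1)^i((a_1\ast a_i,\dots,a_{i-1}\ast a_i,a_{i+1},\dots,a_n)-(a_1,\dots,a_{i-1},a_{i+1}\circ a_i,\dots,a_n\circ a_i))$ for $n\ge2$ ($\partial_n=0$ for $n\le1$), where $C'_n(S)$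 ($n\ge2$) is generated by $(a_1,\dots,a_i,a_{i+1},\dots,a_n)+(a_1,\dots,a_{i+1}\circ a_i,a_i\ast a_{i+1},\dots,a_n)$ and $C'_n(S)=0$ for $n\le1$. $C^{SF}_\ast(S)=C_\ast(S)$ with boundary $d_n(a_1,\dots,a_n)=\sum_{i=1}^{n-1}(-1)^i((a_1,\dots,\widehat{a_i},\dots,a_n)-(a_1,\dots,\widehat{a_i},\dots,a_{n-1},a_n\circ a_i))$. A map $S\times S\to A$ extended linearly is a 2-cochain; cocycle/coboundary are with respect to the dual coboundary maps. Flat virtual link diagrams have flat crossings (no over/under information) and virtual crossings. A v-arc is a part of the diagram between consecutive virtual crossings. A coloring $\theta$ assigns an element of $S$ to each v-arc such that at each virtual crossing $\tau$, rotated so both strands point downward, if the incoming upper-left v-arc has color $a$ and the incoming upper-right v-arc has color $b$, then the outgoing arc continuing the upper-left strand has color $a\ast b$ and the outgoing arc continuing the upper-right strand has color $b\circ a$; for a map $\psi:S\times S\to A$ the weight of $\tau$ is $\psi(a,b)$. The state-sum is $\Phi_\psi(L)=\sum_\theta\big[\sum_\tau \psi(a_\tau,b_\tau)\big]\in\mathbb{Z}[A]$, where $[x]$ is the group ring basis element of $x\in A$ and the sum is over all colorings. *)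

theory Defs
  imports Main "HOL-Library.FuncSet"
begin

text \<open>Virtual flat biquandle on a (finite) type 's, with operations
  st a b = a \<ast> b  (so S_b(a) = st a b) and ci a b = a \<circ> b (so T_b(a) = ci a b).\<close>

definition vf_biquandle :: "('s \<Rightarrow> 's \<Rightarrow> 's) \<Rightarrow> ('s \<Rightarrow> 's \<Rightarrow> 's) \<Rightarrow> bool" where
  "vf_biquandle st ci \<longleftrightarrow>
     (\<forall>a b x. st (st x b) a = st (st x a) b) \<and>
     (\<forall>a b x. ci (ci x b) a = ci (ci x a) b) \<and>
     (\<forall>a b x. st (ci x b) a = ci (st x a) b) \<and>
     (\<forall>a b x. st x a = st x (ci a b) \<and> st x a = st x (st a b)) \<and>
     (\<forall>a b x. ci x a = ci x (st a b) \<and> ci x a = ci x (ci a b)) \<and>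
     (\<forall>a x. ci (st x a) a = x \<and> st (ci x a) a = x)"

text \<open>Cochains are represented as functions on tuples (lists) extended linearly.
  Evaluation of a cochain f on the boundary of a generator xs = (a_1,...,a_n):
  i ranges over 0..n-1 (i.e. index i+1 in the paper, sign (-1)^(i+1)).\<close>

definition vf_bd_eval :: "('s \<Rightarrow> 's \<Rightarrow> 's) \<Rightarrow> ('s \<Rightarrow> 's \<Rightarrow> 's) \<Rightarrow> ('s list \<Rightarrow> 'a::ab_group_add) \<Rightarrow> 's list \<Rightarrow> 'a" where
  "vf_bd_eval st ci f xs =
     (if length xs \<le> 1 then 0 else
      (\<Sum>i<length xs. (if even (i+1) then id else uminus) (
          f (map (\<lambda>x. st x (xs!i)) (take i xs) @ drop (i+1) xs)
        - f (take i xs @ map (\<lambda>x. ci x (xs!i)) (drop (i+1) xs)))))"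

text \<open>Generators of C'_n: (.., a_i, a_{i+1}, ..) + (.., a_{i+1} o a_i, a_i * a_{i+1}, ..).\<close>
definition vf_swap :: "('s \<Rightarrow> 's \<Rightarrow> 's) \<Rightarrow> ('s \<Rightarrow> 's \<Rightarrow> 's) \<Rightarrow> nat \<Rightarrow> 's list \<Rightarrow> 's list" where
  "vf_swap st ci i xs = take i xs @ [ci (xs!(i+1)) (xs!i), st (xs!i) (xs!(i+1))] @ drop (i+2) xs"

definition vf_cochain :: "('s \<Rightarrow> 's \<Rightarrow> 's) \<Rightarrow> ('s \<Rightarrow> 's \<Rightarrow> 's) \<Rightarrow> nat \<Rightarrow> ('s list \<Rightarrow> 'a::ab_group_add) \<Rightarrow> bool" where
  "vf_cochain st ci n f \<longleftrightarrow>
     (\<forall>xs i. length xs = n \<and> n \<ge> 2 \<and> i + 1 < n \<longrightarrow> f xs + f (vf_swap st ci i xs) = 0)"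

definition vf_cocycle :: "('s \<Rightarrow> 's \<Rightarrow> 's) \<Rightarrow> ('s \<Rightarrow> 's \<Rightarrow> 's) \<Rightarrow> nat \<Rightarrow> ('s list \<Rightarrow> 'a::ab_group_add) \<Rightarrow> bool" where
  "vf_cocycle st ci n f \<longleftrightarrow> vf_cochain st ci n f \<and>
     (\<forall>xs. length xs = n + 1 \<longrightarrow> vf_bd_eval st ci f xs = 0)"

definition sf_bd_eval :: "('s \<Rightarrow> 's \<Rightarrow> 's) \<Rightarrow> ('s list \<Rightarrow> 'a::ab_group_add) \<Rightarrow> 's list \<Rightarrow> 'a" where
  "sf_bd_eval ci f xs =
     (\<Sum>i<length xs - 1. (if even (i+1) then id else uminus) (
          f (take i xs @ drop (i+1) xs)
        - f (take i xs @ drop (i+1) (butlast xs) @ [ci (last xs) (xs!i)])))"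

definition sf_cocycle :: "('s \<Rightarrow> 's \<Rightarrow> 's) \<Rightarrow> nat \<Rightarrow> ('s list \<Rightarrow> 'a::ab_group_add) \<Rightarrow> bool" where
  "sf_cocycle ci n f \<longleftrightarrow> (\<forall>xs. length xs = n + 1 \<longrightarrow> sf_bd_eval ci f xs = 0)"

definition cochain2 :: "('s \<Rightarrow> 's \<Rightarrow> 'a) \<Rightarrow> 's list \<Rightarrow> 'a" where
  "cochain2 \<phi> xs = \<phi> (xs!0) (xs!1)"

definition cochain1 :: "('s \<Rightarrow> 'a) \<Rightarrow> 's list \<Rightarrow> 'a" where
  "cochain1 \<eta> xs = \<eta> (xs!0)"

text \<open>Combinatorial model of an oriented flat virtual link diagram, as far as colorings
  and the state-sum are concerned (flat crossings play no role there).
  X : finite set of virtual crossings.  Each crossing c has two strands: (c,True) the strand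
  entering from the upper left, (c,False) the strand entering from the upper right
  (after rotating so both strands point downward).
  nxt (c,s) = (c',s') means: the v-arc leaving c along strand s next enters c' along strand s'.
  k : number of components containing no virtual crossing (each is a single closed v-arc).\<close>

definition vdiagram :: "nat set \<Rightarrow> (nat \<times> bool \<Rightarrow> nat \<times> bool) \<Rightarrow> bool" where
  "vdiagram X nxt \<longleftrightarrow> finite X \<and> bij_betw nxt (X \<times> UNIV) (X \<times> UNIV)"

text \<open>A coloring: f (c,s) is the color of the v-arc entering crossing c along strand s;
  g j the color of the j-th crossing-free component.\<close>
definition colorings :: "('s \<Rightarrow> 's \<Rightarrow> 's) \<Rightarrow> ('s \<Rightarrow> 's \<Rightarrow> 's) \<Rightarrow> nat set \<Rightarrow> (nat \<times> bool \<Rightarrow> nat \<times> bool) \<Rightarrow> nat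
     \<Rightarrow> ((nat \<times> bool \<Rightarrow> 's) \<times> (nat \<Rightarrow> 's)) set" where
  "colorings st ci X nxt k =
     {(f, g). f \<in> (X \<times> UNIV) \<rightarrow>\<^sub>E UNIV \<and> g \<in> {..<k} \<rightarrow>\<^sub>E UNIV \<and>
        (\<forall>c\<in>X. f (nxt (c, True)) = st (f (c, True)) (f (c, False)) \<and>
                f (nxt (c, False)) = ci (f (c, False)) (f (c, True)))}"

definition coloring_weight :: "('s \<Rightarrow> 's \<Rightarrow> 'a::ab_group_add) \<Rightarrow> nat set \<Rightarrow> (nat \<times> bool \<Rightarrow> 's) \<Rightarrow> 'a" where
  "coloring_weight \<psi> X f = (\<Sum>c\<in>X. \<psi> (f (c, True)) (f (c, False)))"

text \<open>State-sum in Z[A], represented as the coefficient function A -> Z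
  (coefficient of [x] = number of colorings of total weight x).\<close>
definition state_sum :: "('s \<Rightarrow> 's \<Rightarrow> 's) \<Rightarrow> ('s \<Rightarrow> 's \<Rightarrow> 's) \<Rightarrow> ('s \<Rightarrow> 's \<Rightarrow> 'a::ab_group_add)
     \<Rightarrow> nat set \<Rightarrow> (nat \<times> bool \<Rightarrow> nat \<times> bool) \<Rightarrow> nat \<Rightarrow> 'a \<Rightarrow> int" where
  "state_sum st ci \<psi> X nxt k =
     (\<lambda>x. int (card {\<theta> \<in> colorings st ci X nxt k. coloring_weight \<psi> X (fst \<theta>) = x}))"

end

theory Submission
  imports Defs
begin

text \<open>The coboundary \<open>\<phi>' = \<delta>\<eta>\<close> assigns to a crossing with incoming colors \<open>a, b\<close> the value
  \<open>\<eta>(a \<ast> b) + \<eta>(b \<circ> a) - \<eta>(a) - \<eta>(b)\<close>: the \<open>\<eta>\<close>-values of the outgoing v-arcs minus those of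
  the incoming ones. Summed over all crossings of a colored diagram this telescopes to zero,
  since every v-arc leaves exactly one crossing and enters exactly one. That \<open>\<delta>\<eta>\<close> is also a
  cocycle of the shadow complex \<open>C\<^sup>S\<^sup>F\<close> is a direct computation using only the biquandle laws
  \<open>(x \<circ> b) \<circ> a = (x \<circ> a) \<circ> b\<close> and \<open>x \<ast> (a \<circ> b) = x \<ast> a\<close>.\<close>

lemma vf_bd_eval_cochain1_pair:
  "vf_bd_eval st ci (cochain1 \<eta>) [a, b] = \<eta> (st a b) + \<eta> (ci b a) - \<eta> a - \<eta> b"
  by (simp add: vf_bd_eval_def cochain1_def lessThan_nat_numeral algebra_simps)

lemma cochain2_add:
  "cochain2 (\<lambda>a b. \<phi> a b + \<psi> a b) = (\<lambda>xs. cochain2 \<phi> xs + cochain2 \<psi> xs)"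
  by (simp add: cochain2_def fun_eq_iff)

lemma sf_bd_eval_add:
  "sf_bd_eval ci (\<lambda>xs. f xs + g xs) xs = sf_bd_eval ci f xs + sf_bd_eval ci g xs"
  unfolding sf_bd_eval_def sum.distrib[symmetric]
  by (rule sum.cong) (simp_all add: algebra_simps)

lemma sf_cocycle_add:
  assumes "sf_cocycle ci n f" and "sf_cocycle ci n g"
  shows "sf_cocycle ci n (\<lambda>xs. f xs + g xs)"
  using assms by (simp add: sf_cocycle_def sf_bd_eval_add)

lemma sf_bd_eval_cochain2_triple:
  "sf_bd_eval ci (cochain2 \<phi>) [a, b, c] = \<phi> a c - \<phi> a (ci c b) - \<phi> b c + \<phi> b (ci c a)"
  by (simp add: sf_bd_eval_def cochain2_def lessThan_nat_numeral algebra_simps)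

lemma sf_cocycle_vf_coboundary:
  assumes "vf_biquandle st ci"
  shows "sf_cocycle ci 2 (cochain2 (\<lambda>a b. vf_bd_eval st ci (cochain1 \<eta>) [a, b]))"
  unfolding sf_cocycle_def
proof (intro allI impI)
  fix xs :: "'a list"
  assume "length xs = 2 + 1"
  then obtain a b c where xs: "xs = [a, b, c]"
    by (auto simp: numeral_3_eq_3 length_Suc_conv)
  have "ci (ci c a) b = ci (ci c b) a" "st b (ci c a) = st b c" "st a (ci c b) = st a c"
    using assms unfolding vf_biquandle_def by metis+
  then show "sf_bd_eval ci (cochain2 (\<lambda>a b. vf_bd_eval st ci (cochain1 \<eta>) [a, b])) xs = 0"
    by (simp add: xs sf_bd_eval_cochain2_triple vf_bd_eval_cochain1_pair algebra_simps)
qed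

lemma sum_times_UNIV_bool:
  "(\<Sum>p\<in>X \<times> UNIV. h p) = (\<Sum>c\<in>X. h (c, True) + h (c, False))"
proof -
  have "(\<Sum>p\<in>X \<times> UNIV. h p) = (\<Sum>c\<in>X. \<Sum>s\<in>UNIV. h (c, s))"
    using sum.cartesian_product[of "\<lambda>c s. h (c, s)" UNIV X] by simp
  then show ?thesis
    by (simp add: UNIV_bool add.commute)
qed

lemma coloring_weight_vf_coboundary:
  assumes "vdiagram X nxt" and "(f, g) \<in> colorings st ci X nxt k"
  shows "coloring_weight (\<lambda>a b. vf_bd_eval st ci (cochain1 \<eta>) [a, b]) X f = 0"
proof -
  have bij: "bij_betw nxt (X \<times> UNIV) (X \<times> UNIV)"
    using assms(1) by (simp add: vdiagram_def)
  have outgoing: "\<And>c. c \<in> X \<Longrightarrow> f (nxt (c, True)) = st (f (c, True)) (f (c, False)) \<and>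
      f (nxt (c, False)) = ci (f (c, False)) (f (c, True))"
    using assms(2) by (simp add: colorings_def)
  have "coloring_weight (\<lambda>a b. vf_bd_eval st ci (cochain1 \<eta>) [a, b]) X f
      = (\<Sum>c\<in>X. \<eta> (f (nxt (c, True))) + \<eta> (f (nxt (c, False))))
        - (\<Sum>c\<in>X. \<eta> (f (c, True)) + \<eta> (f (c, False)))"
    unfolding coloring_weight_def sum_subtractf[symmetric]
    by (rule sum.cong) (simp_all add: outgoing vf_bd_eval_cochain1_pair algebra_simps)
  also have "\<dots> = (\<Sum>p\<in>X \<times> UNIV. \<eta> (f (nxt p))) - (\<Sum>p\<in>X \<times> UNIV. \<eta> (f p))"
    by (simp add: sum_times_UNIV_bool)
  also have "(\<Sum>p\<in>X \<times> UNIV. \<eta> (f (nxt p))) = (\<Sum>p\<in>X \<times> UNIV. \<eta> (f p))"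
    using sum.reindex_bij_betw[OF bij, of "\<lambda>p. \<eta> (f p)"] by simp
  finally show ?thesis by simp
qed

lemma state_sum_cong:
  assumes "\<And>f g. (f, g) \<in> colorings st ci X nxt k \<Longrightarrow> coloring_weight \<psi> X f = coloring_weight \<psi>' X f"
  shows "state_sum st ci \<psi> X nxt k = state_sum st ci \<psi>' X nxt k"
proof -
  have "{\<theta> \<in> colorings st ci X nxt k. coloring_weight \<psi> X (fst \<theta>) = x}
      = {\<theta> \<in> colorings st ci X nxt k. coloring_weight \<psi>' X (fst \<theta>) = x}" for x
    using assms by fastforce
  then show ?thesis
    by (simp add: state_sum_def)
qed

lemma state_sum_add_vf_coboundary:
  assumes "vdiagram X nxt"
  shows "state_sum st ci (\<lambda>a b. \<phi> a b + vf_bd_eval st ci (cochain1 \<eta>) [a, b]) X nxt k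
       = state_sum st ci \<phi> X nxt k"
proof (rule state_sum_cong)
  fix f g
  assume "(f, g) \<in> colorings st ci X nxt k"
  then show "coloring_weight (\<lambda>a b. \<phi> a b + vf_bd_eval st ci (cochain1 \<eta>) [a, b]) X f
      = coloring_weight \<phi> X f"
    using coloring_weight_vf_coboundary[OF assms]
    by (simp add: coloring_weight_def sum.distrib)
qed

theorem proposition5p5:
  fixes st ci :: "'s::finite \<Rightarrow> 's \<Rightarrow> 's"
    and \<phi> \<phi>' :: "'s \<Rightarrow> 's \<Rightarrow> 'a::ab_group_add"
    and \<eta> :: "'s \<Rightarrow> 'a"
  assumes "vf_biquandle st ci"
    and "\<forall>x::'a. x + x = 0 \<longrightarrow> x = 0"
    and "vf_cocycle st ci 2 (cochain2 \<phi>)"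
    and "sf_cocycle ci 2 (cochain2 \<phi>)"
    and "\<forall>a b. \<phi>' a b = vf_bd_eval st ci (cochain1 \<eta>) [a, b]"
  shows "sf_cocycle ci 2 (cochain2 (\<lambda>a b. \<phi> a b + \<phi>' a b)) \<and>
    (\<forall>X nxt k. vdiagram X nxt \<longrightarrow>
        state_sum st ci \<phi> X nxt k = state_sum st ci (\<lambda>a b. \<phi> a b + \<phi>' a b) X nxt k)"
proof -
  have \<phi>': "\<phi>' = (\<lambda>a b. vf_bd_eval st ci (cochain1 \<eta>) [a, b])"
    using assms(5) by blast
  have "sf_cocycle ci 2 (cochain2 (\<lambda>a b. \<phi> a b + \<phi>' a b))"
    unfolding cochain2_add \<phi>'
    using sf_cocycle_add[OF assms(4) sf_cocycle_vf_coboundary[OF assms(1)]] .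
  moreover have "state_sum st ci \<phi> X nxt k = state_sum st ci (\<lambda>a b. \<phi> a b + \<phi>' a b) X nxt k"
    if "vdiagram X nxt" for X nxt k
    unfolding \<phi>' using state_sum_add_vf_coboundary[OF that] by (rule sym)
  ultimately show ?thesis by blast
qed

end
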